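(* Let $N\ge 2$, let $0<\gamma_1\le\gamma_2\le\dots\le\gamma_N$ and $\Gamma_{\mathrm d}>0$. Among all spanning trees $T$ on $\{1,\dots,N\}$, the path $P$ with edges $\{1,2\},\{2,3\},\dots,\{N-1,N\}$ maximizes $R_{\mathrm c}(T)$, and $$R_{\mathrm c}(P)=\frac{1}{2(N-1)}\max\Big\{0,\ \min\Big(\big\{\log_2\big(\gamma_i+\tfrac{\gamma_i}{\gamma_i+\gamma_{i+1}}\big): 1\le i\le N-1\big\}\cup\{\log_2(1+\Gamma_{\mathrm d})\}\Big)\Big\}.$$
   Context: For distinct $i,j\in\{1,\dots,N\}$ put $\varphi(i,j)=\log_2\!\big(\gamma_i+\frac{\gamma_i}{\gamma_i+\gamma_j}\big)$. For a spanning tree $T$ on vertex set $\{1,\dots,N\}$ with edge set $E(T)$, define the common rate $$R_{\mathrm c}(T)=\frac{1}{2(N-1)}\max\Big\{0,\ \min\Big(\{\varphi(i,j): \{i,j\}\in E(T)\ \text{(both orders)}\}\cup\{\log_2(1+\Gamma_{\mathrm d})\}\Big)\Big\}.$$ (Interpretation: user $i$'s rate is bounded by $\frac{1}{2(N-1)}\varphi(i,j)$ for every neighbor $j$ of $i$ in $T$ and by the downlink bound $\frac{1}{2(N-1)}\log_2(1+\Gamma_{\mathrm d})$; the common rate is the minimum over users, clipped at $0$.) *)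

theory Defs
  imports Complex_Main
begin

definition edge_set_on :: "nat \<Rightarrow> nat set set \<Rightarrow> bool" where
  "edge_set_on N E \<longleftrightarrow> (\<forall>e\<in>E. \<exists>i j. i \<noteq> j \<and> i \<in> {1..N} \<and> j \<in> {1..N} \<and> e = {i, j})"

definition adj_rel :: "nat set set \<Rightarrow> (nat \<times> nat) set" where
  "adj_rel E = {(i, j). i \<noteq> j \<and> {i, j} \<in> E}"

definition graph_connected :: "nat \<Rightarrow> nat set set \<Rightarrow> bool" where
  "graph_connected N E \<longleftrightarrow> (\<forall>i\<in>{1..N}. \<forall>j\<in>{1..N}. (i, j) \<in> (adj_rel E)\<^sup>*)"

definition spanning_tree :: "nat \<Rightarrow> nat set set \<Rightarrow> bool" where
  "spanning_tree N E \<longleftrightarrow> edge_set_on N E \<and> graph_connected N E \<and>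
     (\<forall>e\<in>E. \<not> graph_connected N (E - {e}))"

definition phi :: "(nat \<Rightarrow> real) \<Rightarrow> nat \<Rightarrow> nat \<Rightarrow> real" where
  "phi \<gamma> i j = log 2 (\<gamma> i + \<gamma> i / (\<gamma> i + \<gamma> j))"

definition Rc :: "nat \<Rightarrow> (nat \<Rightarrow> real) \<Rightarrow> real \<Rightarrow> nat set set \<Rightarrow> real" where
  "Rc N \<gamma> \<Gamma>d T = 1 / (2 * (real N - 1)) *
     max 0 (Min ({phi \<gamma> i j | i j. {i, j} \<in> T \<and> i \<noteq> j} \<union> {log 2 (1 + \<Gamma>d)}))"

definition path_tree :: "nat \<Rightarrow> nat set set" where
  "path_tree N = {{i, i + 1} | i. 1 \<le> i \<and> i \<le> N - 1}"

end

theory Submission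
  imports Defs
begin

text \<open>Cutting the path between k and k + 1 separates {1..N}: every spanning tree T
  contains an edge {x, y} with x \<le> k < y, and since \<open>\<phi>\<close> increases in its first and
  decreases in its second argument, \<open>\<phi> x y \<le> \<phi> k (k + 1)\<close> for sorted \<gamma>. So each forward
  rate of the path dominates some rate of T, whence the minimum over T is at most the one
  over the path. On the path itself the backward rates \<open>\<phi> (k + 1) k\<close> dominate the
  forward ones and do not change the minimum.\<close>

lemma mono_on_atLeastAtMost_Suc:
  fixes f :: "nat \<Rightarrow> 'a::order"
  assumes "\<And>i. m \<le> i \<Longrightarrow> i < n \<Longrightarrow> f i \<le> f (Suc i)"
  shows "mono_on {m..n} f"
proof (rule mono_onI)
  fix i j assume "i \<in> {m..n}" "j \<in> {m..n}" "i \<le> j"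
  then have "j \<le> n" "m \<le> i" by auto
  from \<open>i \<le> j\<close> \<open>j \<le> n\<close> show "f i \<le> f j"
    by (induction j rule: dec_induct) (use assms \<open>m \<le> i\<close> order_trans in force)+
qed

lemma Min_le_Min_if_dominated:
  fixes A B :: "'a::linorder set"
  assumes "finite A" "finite B" "B \<noteq> {}" "\<forall>b\<in>B. \<exists>a\<in>A. a \<le> b"
  shows "Min A \<le> Min B"
proof -
  obtain a where "a \<in> A" "a \<le> Min B" using assms by (meson Min_in)
  then show ?thesis using \<open>finite A\<close> by (meson Min_le order_trans)
qed

lemma rtrancl_crosses_threshold:
  fixes k :: "'a::linorder"
  assumes "(a, b) \<in> r\<^sup>*" "a \<le> k" "k < b"
  shows "\<exists>x y. (x, y) \<in> r \<and> x \<le> k \<and> k < y"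
  using assms
proof (induction rule: rtrancl_induct)
  case (step y z)
  then show ?case by (cases "y \<le> k") auto
qed simp

lemma phi_mono:
  assumes "0 < \<gamma> i" "\<gamma> i \<le> \<gamma> i'" "0 < \<gamma> j'" "\<gamma> j' \<le> \<gamma> j"
  shows "phi \<gamma> i j \<le> phi \<gamma> i' j'"
proof -
  have "\<gamma> i * \<gamma> j' \<le> \<gamma> i' * \<gamma> j"
    using assms by (intro mult_mono) auto
  then have "\<gamma> i / (\<gamma> i + \<gamma> j) \<le> \<gamma> i' / (\<gamma> i' + \<gamma> j')"
    using assms by (simp add: divide_simps algebra_simps)
  moreover have "0 < \<gamma> i + \<gamma> i / (\<gamma> i + \<gamma> j)"
    using assms by (simp add: add_pos_nonneg)
  ultimately show ?thesis
    unfolding phi_def using assms by simp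
qed

definition edge_rates :: "(nat \<Rightarrow> real) \<Rightarrow> nat set set \<Rightarrow> real set" where
  "edge_rates \<gamma> T = {phi \<gamma> i j | i j. {i, j} \<in> T \<and> i \<noteq> j}"

lemma Rc_eq_edge_rates:
  "Rc N \<gamma> \<Gamma>d T = 1 / (2 * (real N - 1)) * max 0 (Min (edge_rates \<gamma> T \<union> {log 2 (1 + \<Gamma>d)}))"
  unfolding Rc_def edge_rates_def ..

lemma edge_set_on_endpoints:
  assumes "edge_set_on N T" "{i, j} \<in> T"
  shows "i \<in> {1..N}" "j \<in> {1..N}"
  using assms unfolding edge_set_on_def by (metis doubleton_eq_iff)+

lemma finite_edge_rates:
  assumes "edge_set_on N T"
  shows "finite (edge_rates \<gamma> T)"
proof (rule finite_subset)
  show "edge_rates \<gamma> T \<subseteq> (\<lambda>(i, j). phi \<gamma> i j) ` ({1..N} \<times> {1..N})"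
    unfolding edge_rates_def using edge_set_on_endpoints[OF assms] by fast
qed simp

lemma sym_adj_rel: "sym (adj_rel E)"
  unfolding adj_rel_def sym_def by (auto simp: insert_commute)

lemma adj_rel_path_tree_iff:
  "(x, y) \<in> adj_rel (path_tree N) \<longleftrightarrow>
     (1 \<le> min x y \<and> max x y \<le> N \<and> (y = x + 1 \<or> x = y + 1))"
  unfolding adj_rel_def path_tree_def by (auto simp: doubleton_eq_iff)

lemma path_tree_edge_set_on: "edge_set_on N (path_tree N)"
  unfolding edge_set_on_def path_tree_def
proof
  fix e assume "e \<in> {{i, i + 1} | i. 1 \<le> i \<and> i \<le> N - 1}"
  then obtain i where "e = {i, i + 1}" "1 \<le> i" "i \<le> N - 1" by blast
  then show "\<exists>i j. i \<noteq> j \<and> i \<in> {1..N} \<and> j \<in> {1..N} \<and> e = {i, j}"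
    by (intro exI[of _ i] exI[of _ "i + 1"]) auto
qed

lemma path_tree_connected: "graph_connected N (path_tree N)"
proof -
  have "(i, j) \<in> (adj_rel (path_tree N))\<^sup>*" if "1 \<le> i" "i \<le> j" "j \<le> N" for i j
    using \<open>i \<le> j\<close> \<open>j \<le> N\<close>
  proof (induction j rule: dec_induct)
    case (step n)
    then have "(n, Suc n) \<in> adj_rel (path_tree N)"
      using \<open>1 \<le> i\<close> by (simp add: adj_rel_path_tree_iff)
    with step show ?case by (simp add: rtrancl.rtrancl_into_rtrancl)
  qed simp
  moreover have "sym ((adj_rel (path_tree N))\<^sup>*)"
    by (simp add: sym_adj_rel sym_rtrancl)
  ultimately show ?thesis
    unfolding graph_connected_def by (metis atLeastAtMost_iff nle_le symD)
qed

lemma path_tree_minus_edge_disconnected: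
  assumes "e \<in> path_tree N"
  shows "\<not> graph_connected N (path_tree N - {e})"
proof
  obtain k where e: "e = {k, k + 1}" "1 \<le> k" "k + 1 \<le> N"
    using assms unfolding path_tree_def by auto
  assume "graph_connected N (path_tree N - {e})"
  then have "(k, k + 1) \<in> (adj_rel (path_tree N - {e}))\<^sup>*"
    unfolding graph_connected_def using e by auto
  then obtain x y where "(x, y) \<in> adj_rel (path_tree N - {e})" "x \<le> k" "k < y"
    using rtrancl_crosses_threshold by (metis le_refl less_add_one)
  moreover from this have "(x, y) \<in> adj_rel (path_tree N)"
    by (auto simp: adj_rel_def)
  ultimately have "x = k" "y = k + 1"
    by (auto simp: adj_rel_path_tree_iff)
  with \<open>(x, y) \<in> adj_rel (path_tree N - {e})\<close> show False
    using e by (simp add: adj_rel_def)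
qed

lemma path_tree_spanning_tree: "spanning_tree N (path_tree N)"
  unfolding spanning_tree_def
  using path_tree_edge_set_on path_tree_connected path_tree_minus_edge_disconnected by blast

context
  fixes N :: nat and \<gamma> :: "nat \<Rightarrow> real"
  assumes sorted: "mono_on {1..N} \<gamma>" and pos: "\<And>i. i \<in> {1..N} \<Longrightarrow> 0 < \<gamma> i"
begin

lemma spanning_tree_rate_le_path_rate:
  assumes "spanning_tree N T" "1 \<le> k" "k < N"
  shows "\<exists>a\<in>edge_rates \<gamma> T. a \<le> phi \<gamma> k (k + 1)"
proof -
  have "edge_set_on N T" "graph_connected N T"
    using assms(1) unfolding spanning_tree_def by auto
  then have "(k, k + 1) \<in> (adj_rel T)\<^sup>*"
    unfolding graph_connected_def using assms by auto
  then obtain x y where xy: "(x, y) \<in> adj_rel T" "x \<le> k" "k < y"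
    using rtrancl_crosses_threshold by (metis le_refl less_add_one)
  then have edge: "{x, y} \<in> T" "x \<noteq> y"
    unfolding adj_rel_def by auto
  then have "x \<in> {1..N}" "y \<in> {1..N}"
    using edge_set_on_endpoints \<open>edge_set_on N T\<close> by auto
  then have "phi \<gamma> x y \<le> phi \<gamma> k (k + 1)"
    using xy assms by (intro phi_mono pos mono_onD[OF sorted]) auto
  moreover have "phi \<gamma> x y \<in> edge_rates \<gamma> T"
    unfolding edge_rates_def using edge by blast
  ultimately show ?thesis by blast
qed

lemma Min_path_tree_rates:
  assumes "N \<ge> 2"
  shows "Min (edge_rates \<gamma> (path_tree N) \<union> {c})
       = Min ({phi \<gamma> i (i + 1) | i. 1 \<le> i \<and> i \<le> N - 1} \<union> {c})"
    (is "Min (?P \<union> _) = Min (?F \<union> _)")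
proof -
  have fin: "finite ?P" "finite ?F"
    by (simp_all add: finite_edge_rates[OF path_tree_edge_set_on])
  have "?F \<subseteq> ?P"
    unfolding edge_rates_def path_tree_def by force
  moreover have "\<exists>b\<in>?F. b \<le> a" if "a \<in> ?P" for a
  proof -
    obtain i j k where a: "a = phi \<gamma> i j" "{i, j} = {k, k + 1}" "1 \<le> k" "k \<le> N - 1"
      using \<open>a \<in> ?P\<close> unfolding edge_rates_def path_tree_def by auto
    have "phi \<gamma> k (k + 1) \<le> phi \<gamma> (k + 1) k"
      using a assms by (intro phi_mono pos mono_onD[OF sorted]) auto
    with a show ?thesis by (auto simp: doubleton_eq_iff)
  qed
  ultimately show ?thesis
    using fin by (intro antisym Min_le_Min_if_dominated) auto
qed

end

theorem theorem2:
  fixes N :: nat and \<gamma> :: "nat \<Rightarrow> real" and \<Gamma>d :: real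
  assumes "N \<ge> 2"
    and "\<gamma> 1 > 0"
    and "\<And>i. 1 \<le> i \<Longrightarrow> i < N \<Longrightarrow> \<gamma> i \<le> \<gamma> (i + 1)"
    and "\<Gamma>d > 0"
  shows "spanning_tree N (path_tree N)
    \<and> (\<forall>T. spanning_tree N T \<longrightarrow> Rc N \<gamma> \<Gamma>d T \<le> Rc N \<gamma> \<Gamma>d (path_tree N))
    \<and> Rc N \<gamma> \<Gamma>d (path_tree N) = 1 / (2 * (real N - 1)) *
        max 0 (Min ({log 2 (\<gamma> i + \<gamma> i / (\<gamma> i + \<gamma> (i + 1))) | i. 1 \<le> i \<and> i \<le> N - 1}
                    \<union> {log 2 (1 + \<Gamma>d)}))"
proof -
  have sorted: "mono_on {1..N} \<gamma>"
    using assms(3) by (intro mono_on_atLeastAtMost_Suc) simp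
  have pos: "0 < \<gamma> i" if "i \<in> {1..N}" for i
    using assms(1,2) mono_onD[OF sorted, of 1 i] that by force
  define L where "L = log 2 (1 + \<Gamma>d)"
  define F where "F = {phi \<gamma> i (i + 1) | i. 1 \<le> i \<and> i \<le> N - 1}"
  have path_rate: "Rc N \<gamma> \<Gamma>d (path_tree N) = 1 / (2 * (real N - 1)) * max 0 (Min (F \<union> {L}))"
    using Min_path_tree_rates[OF sorted pos assms(1)]
    by (simp add: Rc_eq_edge_rates F_def L_def)
  have "Rc N \<gamma> \<Gamma>d T \<le> Rc N \<gamma> \<Gamma>d (path_tree N)" if "spanning_tree N T" for T
  proof -
    have "Min (edge_rates \<gamma> T \<union> {L}) \<le> Min (F \<union> {L})"
      using that spanning_tree_rate_le_path_rate[OF sorted pos that]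
      by (intro Min_le_Min_if_dominated)
         (auto simp: F_def spanning_tree_def finite_edge_rates)
    then show ?thesis
      using assms(1) unfolding Rc_eq_edge_rates[of N \<gamma> \<Gamma>d T] path_rate L_def[symmetric]
      by (intro mult_left_mono) auto
  qed
  then show ?thesis
    using path_tree_spanning_tree path_rate by (simp add: F_def L_def phi_def)
qed

end
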